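(* Let $E/F$ be a quadratic extension of fields of characteristic $0$ and $\beta\in\mathrm{GL}_n(E)$ skew-Hermitian. Suppose $A'\in\mathfrak h_n^\beta(F)$ is regular semisimple and $A'=\bar a a$ for some $a\in\mathrm{GL}_n(E)$. Then $A'=\beta^{-1}\zeta^*\beta\zeta$ for some $\zeta\in\mathrm{GL}_n(E)$.
   Context: $x\mapsto\bar x$ is the nontrivial automorphism of $E/F$ (entrywise on matrices), $g^*={}^t\bar g$, $\beta^*=-\beta$. $\mathfrak h_n^\beta(F)$ is the set of $A'\in\mathrm{Mat}_n(E)$ with $A'^*=\beta A'\beta^{-1}$. *)

theory Defs
  imports "Jordan_Normal_Form.Char_Poly" "HOL-Computational_Algebra.Polynomial"
begin

text \<open>The quadratic extension E/F is modelled by a field type 'e of characteristic 0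
together with its nontrivial F-automorphism sigma (x maps to x-bar): sigma is a ring
automorphism of E of order exactly 2, and F is its fixed field.  By Artin's theorem
this is the same as a quadratic extension E/F together with its nontrivial automorphism.\<close>

definition quad_conj :: "('e::field \<Rightarrow> 'e) \<Rightarrow> bool" where
  "quad_conj \<sigma> \<longleftrightarrow>
     (\<forall>x y. \<sigma> (x + y) = \<sigma> x + \<sigma> y) \<and>
     (\<forall>x y. \<sigma> (x * y) = \<sigma> x * \<sigma> y) \<and>
     \<sigma> 1 = 1 \<and>
     (\<forall>x. \<sigma> (\<sigma> x) = x) \<and>
     (\<exists>x. \<sigma> x \<noteq> x)"

definition mbar :: "('e \<Rightarrow> 'e) \<Rightarrow> 'e mat \<Rightarrow> 'e mat" where
  "mbar \<sigma> A = map_mat \<sigma> A"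

definition mstar :: "('e \<Rightarrow> 'e) \<Rightarrow> 'e mat \<Rightarrow> 'e mat" where
  "mstar \<sigma> A = transpose_mat (map_mat \<sigma> A)"

definition GLn :: "nat \<Rightarrow> 'e::field mat set" where
  "GLn n = {A. A \<in> carrier_mat n n \<and> invertible_mat A}"

definition minv :: "nat \<Rightarrow> 'e::field mat \<Rightarrow> 'e mat" where
  "minv n A = (THE B. B \<in> carrier_mat n n \<and> A * B = 1\<^sub>m n \<and> B * A = 1\<^sub>m n)"

definition skew_hermitian :: "('e::field \<Rightarrow> 'e) \<Rightarrow> 'e mat \<Rightarrow> bool" where
  "skew_hermitian \<sigma> \<beta> \<longleftrightarrow> mstar \<sigma> \<beta> = - \<beta>"

definition h_beta :: "('e::field \<Rightarrow> 'e) \<Rightarrow> nat \<Rightarrow> 'e mat \<Rightarrow> 'e mat set" where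
  "h_beta \<sigma> n \<beta> = {A. A \<in> carrier_mat n n \<and> mstar \<sigma> A = \<beta> * A * minv n \<beta>}"

text \<open>Regular semisimple: the characteristic polynomial has n distinct roots over an
algebraic closure, i.e. it is separable (coprime to its derivative).\<close>
definition regular_semisimple :: "'e::field mat \<Rightarrow> bool" where
  "regular_semisimple A \<longleftrightarrow> coprime (char_poly A) (pderiv (char_poly A))"

end

theory Submission
  imports Defs
begin

text \<open>
  Put \<open>S = a\<^sup>T \<beta>\<close>. From \<open>A'\<^sup>* = \<beta> A' \<beta>\<^sup>-\<^sup>1\<close> and \<open>A' = conj(a) a\<close> one gets
  \<open>S A' = A'\<^sup>T S\<close>. For a regular semisimple \<open>A'\<close> every such intertwiner is symmetric: the
  skew part \<open>K\<close> of \<open>S\<close> intertwines as well, and with \<open>R\<close> the adjugate of \<open>x I - A'\<close>,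
  Jacobi's theorem on the 2 x 2 minors of \<open>R\<close> shows that the characteristic polynomial \<open>f\<close>
  divides \<open>f' K R\<close>. As \<open>f\<close> and \<open>f'\<close> are coprime, \<open>K R = f Z\<close>, i.e. \<open>Z (x I - A') = K\<close>, which
  forces \<open>K = 0\<close>. Conjugating \<open>S = S\<^sup>T\<close> gives \<open>a\<^sup>* \<beta>\<^sup>T = \<beta> conj(a)\<close>.
  On the other hand a skew-Hermitian \<open>\<beta>\<close> is congruent to a symmetric matrix (split off
  anisotropic vectors, which exist as \<open>\<sigma> \<noteq> id\<close> and 2 is invertible), and hence
  \<open>Q\<^sup>* \<beta> Q = \<beta>\<^sup>T\<close> for some invertible \<open>Q\<close>. Then \<open>\<zeta> = Q a\<close> satisfies
  \<open>\<zeta>\<^sup>* \<beta> \<zeta> = a\<^sup>* \<beta>\<^sup>T a = \<beta> conj(a) a = \<beta> A'\<close>.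
\<close>

section \<open>Jacobi's theorem on the minors of the adjugate\<close>

lemma permutes_fixing_all_but_two:
  assumes p: "p permutes {0..<n}" and i: "i < n" and k: "k < n" and ik: "i \<noteq> k"
    and fix_other: "\<And>r. r < n \<Longrightarrow> p r \<noteq> i \<Longrightarrow> p r \<noteq> k \<Longrightarrow> p r = r"
  shows "p = id \<or> p = Transposition.transpose i k"
proof -
  have inj: "inj p" using p permutes_inj by blast
  have "p i \<in> {i, k}" and "p k \<in> {i, k}"
    using fix_other[OF i] fix_other[OF k] ik by auto
  then have swap_or_fix: "(p i = i \<and> p k = k) \<or> (p i = k \<and> p k = i)"
    using inj ik by (auto dest: injD)
  have other: "p r = r" if "r \<noteq> i" "r \<noteq> k" for r
  proof (cases "r < n")
    case True
    have "p r \<noteq> i" "p r \<noteq> k" using swap_or_fix that inj by (metis injD)+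
    then show ?thesis using fix_other[OF True] by simp
  next
    case False
    then show ?thesis using p unfolding permutes_def by auto
  qed
  show ?thesis
  proof (cases "p i = i")
    case True
    then show ?thesis using swap_or_fix other by (metis eq_id_iff)
  next
    case False
    then show ?thesis using swap_or_fix other by (auto simp: fun_eq_iff Transposition.transpose_def)
  qed
qed

definition two_columns_replaced :: "'a mat \<Rightarrow> nat \<Rightarrow> nat \<Rightarrow> 'a vec \<Rightarrow> 'a vec \<Rightarrow> 'a mat" where
  "two_columns_replaced B i k u v = mat (dim_row B) (dim_col B)
     (\<lambda>(r, c). if c = i then u $ r else if c = k then v $ r else B $$ (r, c))"

lemma two_columns_replaced_carrier [simp]:
  "B \<in> carrier_mat m n \<Longrightarrow> two_columns_replaced B i k u v \<in> carrier_mat m n"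
  unfolding two_columns_replaced_def by simp

lemma det_two_columns_replaced_one:
  fixes u v :: "'a::comm_ring_1 vec"
  assumes i: "i < n" and k: "k < n" and ik: "i \<noteq> k"
  shows "det (two_columns_replaced (1\<^sub>m n) i k u v) = u $ i * v $ k - u $ k * v $ i"
proof -
  define X where "X = two_columns_replaced (1\<^sub>m n) i k u v"
  have X: "X \<in> carrier_mat n n" unfolding X_def by simp
  have X_index: "X $$ (r, c) = (if c = i then u $ r else if c = k then v $ r else if r = c then 1 else 0)"
    if "r < n" "c < n" for r c
    using that unfolding X_def two_columns_replaced_def by simp
  let ?g = "\<lambda>p. signof p * (\<Prod>r = 0..<n. X $$ (r, p r))"
  let ?swap = "Transposition.transpose i k"
  have only_two: "p = id \<or> p = ?swap"
    if p: "p permutes {0..<n}" and nz: "(\<Prod>r = 0..<n. X $$ (r, p r)) \<noteq> 0" for p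
  proof (rule permutes_fixing_all_but_two[OF p i k ik])
    fix r assume r: "r < n" and "p r \<noteq> i" "p r \<noteq> k"
    moreover have "X $$ (r, p r) \<noteq> 0" using nz r by (metis atLeastLessThan_iff finite_atLeastLessThan prod_zero zero_le)
    moreover have "p r < n" using p r by (simp add: permutes_in_image)
    ultimately show "p r = r" by (auto simp: X_index split: if_splits)
  qed
  have id_term: "(\<Prod>r = 0..<n. X $$ (r, r)) = u $ i * v $ k"
  proof -
    have "(\<Prod>r = 0..<n. X $$ (r, r)) = (\<Prod>r \<in> {i, k}. X $$ (r, r))"
      by (rule prod.mono_neutral_right) (use i k in \<open>auto simp: X_index\<close>)
    then show ?thesis using ik i k by (simp add: X_index)
  qed
  have swap_term: "(\<Prod>r = 0..<n. X $$ (r, ?swap r)) = v $ i * u $ k"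
  proof -
    have "(\<Prod>r = 0..<n. X $$ (r, ?swap r)) = (\<Prod>r \<in> {i, k}. X $$ (r, ?swap r))"
      by (rule prod.mono_neutral_right)
        (use i k in \<open>auto simp: X_index Transposition.transpose_def\<close>)
    then show ?thesis using ik i k by (simp add: X_index Transposition.transpose_def)
  qed
  have "det X = sum ?g {p. p permutes {0..<n}}" by (rule det_def'[OF X])
  also have "\<dots> = sum ?g {id, ?swap}"
    by (rule sum.mono_neutral_right[OF finite_permutations[OF finite_atLeastLessThan]])
      (use i k only_two in \<open>force intro: permutes_swap_id\<close>)+
  also have "\<dots> = ?g id + ?g ?swap"
    using ik by (subst sum.insert) (auto simp: fun_eq_iff Transposition.transpose_def)
  also have "\<dots> = u $ i * v $ k - u $ k * v $ i"
    using id_term swap_term ik by (simp add: sign_swap_id)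
  finally show ?thesis unfolding X_def .
qed

lemma mult_two_columns_replaced_one:
  fixes M :: "'a::comm_ring_1 mat"
  assumes M: "M \<in> carrier_mat n n" and u: "u \<in> carrier_vec n" and v: "v \<in> carrier_vec n"
    and i: "i < n" and k: "k < n"
  shows "M * two_columns_replaced (1\<^sub>m n) i k u v = two_columns_replaced M i k (M *\<^sub>v u) (M *\<^sub>v v)"
  by (rule eq_matI) (use M u v i k in \<open>auto simp: two_columns_replaced_def col_def scalar_prod_def
      if_distrib[where f = "\<lambda>x. _ * x"] cong: if_cong\<close>)

lemma two_columns_replaced_smult:
  fixes B :: "'a::comm_ring_1 mat"
  assumes B: "B \<in> carrier_mat m n" and u: "u \<in> carrier_vec m" and v: "v \<in> carrier_vec m"
    and i: "i < n" and k: "k < n"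
  shows "two_columns_replaced B i k (c \<cdot>\<^sub>v u) (c \<cdot>\<^sub>v v)
    = two_columns_replaced B i k u v * mat_diag n (\<lambda>r. if r = i \<or> r = k then c else 1)"
  by (subst mat_diag_mult_right[of _ m]) (use B u v in \<open>auto simp: two_columns_replaced_def mult.commute intro!: eq_matI\<close>)

lemma det_mat_diag: "det (mat_diag n g) = (\<Prod>r = 0..<n. g r)"
  by (subst det_upper_triangular[of _ n]) (auto simp: mat_diag_def prod_list_diag_prod)

text \<open>Jacobi's theorem for 2 x 2 minors: with \<open>X\<close> the identity with two columns taken from
  \<open>adj M\<close>, one has \<open>M X = Z D\<close> with \<open>det D = (det M)\<^sup>2\<close>, so \<open>det X = det Z det M\<close>.\<close>
lemma det_dvd_adj_mat_minor:
  fixes M :: "'a::idom mat"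
  assumes M: "M \<in> carrier_mat n n" and det0: "det M \<noteq> 0"
    and i: "i < n" and k: "k < n" and j: "j < n" and l: "l < n"
  shows "det M dvd adj_mat M $$ (i, j) * adj_mat M $$ (k, l) - adj_mat M $$ (k, j) * adj_mat M $$ (i, l)"
proof (cases "i = k")
  case ik: False
  define R where "R = adj_mat M"
  define f where "f = det M"
  have R: "R \<in> carrier_mat n n" and MR: "M * R = f \<cdot>\<^sub>m 1\<^sub>m n"
    using adj_mat[OF M] unfolding R_def f_def by auto
  have M_col: "M *\<^sub>v col R c = f \<cdot>\<^sub>v unit_vec n c" if "c < n" for c
    using col_mult2[OF M R that, symmetric] that by (simp add: MR)
  define X where "X = two_columns_replaced (1\<^sub>m n) i k (col R j) (col R l)"
  define Z where "Z = two_columns_replaced M i k (unit_vec n j) (unit_vec n l)"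
  define D where "D = mat_diag n (\<lambda>r. if r = i \<or> r = k then f else 1)"
  have "M * X = Z * D"
    unfolding X_def Z_def D_def
    using M R i k j l by (simp add: mult_two_columns_replaced_one M_col two_columns_replaced_smult)
  moreover have "det D = f * f"
  proof -
    have "(\<Prod>r = 0..<n. if r = i \<or> r = k then f else 1) = (\<Prod>r \<in> {i, k}. if r = i \<or> r = k then f else 1)"
      by (rule prod.mono_neutral_right) (use i k in auto)
    then show ?thesis using ik by (simp add: D_def det_mat_diag)
  qed
  ultimately have "f * det X = det Z * (f * f)"
    using det_mult[OF M, of X] det_mult[of Z n D] M unfolding f_def
    by (simp add: X_def Z_def D_def)
  then have "det X = det Z * f" using det0 unfolding f_def by (simp add: algebra_simps)
  moreover have "det X = R $$ (i, j) * R $$ (k, l) - R $$ (k, j) * R $$ (i, l)"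
    unfolding X_def det_two_columns_replaced_one[OF i k ik] using i j k l R by simp
  ultimately show ?thesis unfolding R_def f_def by (metis dvd_triv_right)
qed simp

section \<open>Intertwiners of a regular semisimple matrix\<close>

lemma mat_delete_char_poly_matrix:
  assumes A: "A \<in> carrier_mat n n"
  shows "mat_delete (char_poly_matrix A) c c = char_poly_matrix (mat_delete A c c)"
  by (rule eq_matI) (use A in \<open>auto simp: mat_delete_def char_poly_matrix_def\<close>)

lemma trace_adj_char_poly_matrix:
  fixes A :: "'a::idom mat"
  assumes A: "A \<in> carrier_mat n n"
  shows "(\<Sum>c = 0..<n. adj_mat (char_poly_matrix A) $$ (c, c)) = pderiv (char_poly A)"
proof -
  have "adj_mat (char_poly_matrix A) $$ (c, c) = char_poly (mat_delete A c c)" if "c < n" for c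
    using that char_poly_matrix_closed[OF A]
    by (simp add: carrier_matD adj_mat_def cofactor_def char_poly_def mat_delete_char_poly_matrix[OF A]
        flip: mult_2)
  then show ?thesis
    unfolding pderiv_char_poly[OF A] by (auto simp: atLeast0LessThan intro: sum.cong)
qed

lemma mult_char_poly_matrix_index:
  fixes Z :: "'a::comm_ring_1 poly mat"
  assumes Z: "Z \<in> carrier_mat m n" and A: "A \<in> carrier_mat n n" and a: "a < m" and b: "b < n"
  shows "(Z * char_poly_matrix A) $$ (a, b)
    = pCons 0 (Z $$ (a, b)) - (\<Sum>c = 0..<n. Polynomial.smult (A $$ (c, b)) (Z $$ (a, c)))"
proof -
  have "(Z * char_poly_matrix A) $$ (a, b)
      = (\<Sum>c = 0..<n. (if c = b then pCons 0 (Z $$ (a, c)) else 0) - Polynomial.smult (A $$ (c, b)) (Z $$ (a, c)))"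
    using Z A a b
    by (auto simp: scalar_prod_def char_poly_matrix_def algebra_simps intro!: sum.cong)
  then show ?thesis using b by (simp add: sum_subtractf)
qed

lemma const_mult_char_poly_matrix_index:
  fixes K :: "'a::comm_ring_1 mat"
  assumes K: "K \<in> carrier_mat m n" and A: "A \<in> carrier_mat n n" and a: "a < m" and b: "b < n"
  shows "(map_mat (\<lambda>x. [:x:]) K * char_poly_matrix A) $$ (a, b) = [:- (K * A) $$ (a, b), K $$ (a, b):]"
  using K A a b
  by (simp add: mult_char_poly_matrix_index scalar_prod_def smult_sum2 sum_to_poly mult.commute)

lemma const_intertwiner_char_poly_matrix:
  fixes K A :: "'a::comm_ring_1 mat"
  assumes K: "K \<in> carrier_mat n n" and A: "A \<in> carrier_mat n n" and KA: "K * A = transpose_mat A * K"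
  shows "map_mat (\<lambda>x. [:x:]) K * char_poly_matrix A
    = transpose_mat (char_poly_matrix A) * map_mat (\<lambda>x. [:x:]) K"
    (is "?L * ?M = _")
proof (rule eq_matI)
  fix a b assume "a < dim_row (transpose_mat ?M * ?L)" "b < dim_col (transpose_mat ?M * ?L)"
  then have a: "a < n" and b: "b < n" using K char_poly_matrix_closed[OF A] by auto
  have KtA: "transpose_mat K * A = transpose_mat (K * A)"
    using K A by (simp add: KA transpose_mult[of _ n n])
  have "transpose_mat ?M * ?L = transpose_mat (map_mat (\<lambda>x. [:x:]) (transpose_mat K) * ?M)"
    using K char_poly_matrix_closed[OF A] by (simp add: transpose_mult[of _ n n] map_mat_transpose)
  then have "(transpose_mat ?M * ?L) $$ (a, b) = (map_mat (\<lambda>x. [:x:]) (transpose_mat K) * ?M) $$ (b, a)"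
    using K char_poly_matrix_closed[OF A] a b by simp
  also have "\<dots> = (?L * ?M) $$ (a, b)"
    using K A a b by (simp add: const_mult_char_poly_matrix_index KtA)
  finally show "(?L * ?M) $$ (a, b) = (transpose_mat ?M * ?L) $$ (a, b)" ..
qed (use K char_poly_matrix_closed[OF A] in auto)

text \<open>Comparing coefficients, each coefficient of \<open>Z\<close> is a combination of the next higher ones,
  so all of them vanish.\<close>
lemma const_left_multiple_of_char_poly_matrix_eq_0:
  fixes Z :: "'a::comm_ring_1 poly mat" and K A :: "'a mat"
  assumes Z: "Z \<in> carrier_mat m n" and A: "A \<in> carrier_mat n n" and K: "K \<in> carrier_mat m n"
    and eq: "Z * char_poly_matrix A = map_mat (\<lambda>x. [:x:]) K"
  shows "K = 0\<^sub>m m n"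
proof -
  have entry: "pCons 0 (Z $$ (a, b)) - (\<Sum>c = 0..<n. Polynomial.smult (A $$ (c, b)) (Z $$ (a, c)))
      = [:K $$ (a, b):]" if "a < m" "b < n" for a b
    using arg_cong[OF eq, of "\<lambda>X. X $$ (a, b)"] mult_char_poly_matrix_index[OF Z A that] K that by simp
  have coeff_step: "coeff (Z $$ (a, b)) d = (\<Sum>c = 0..<n. A $$ (c, b) * coeff (Z $$ (a, c)) (Suc d))"
    if "a < m" "b < n" for a b d
    using arg_cong[OF entry[OF that], of "\<lambda>p. coeff p (Suc d)"] by (simp add: coeff_sum)
  define D where "D = Suc (\<Sum>a = 0..<m. \<Sum>b = 0..<n. degree (Z $$ (a, b)))"
  have degree_less: "degree (Z $$ (a, b)) < D" if "a < m" "b < n" for a b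
  proof -
    have "degree (Z $$ (a, b)) \<le> (\<Sum>b = 0..<n. degree (Z $$ (a, b)))"
      using that by (intro member_le_sum) auto
    also have "\<dots> \<le> (\<Sum>a = 0..<m. \<Sum>b = 0..<n. degree (Z $$ (a, b)))"
      using that by (intro member_le_sum[of a _ "\<lambda>a. \<Sum>b = 0..<n. degree (Z $$ (a, b))"]) auto
    finally show ?thesis unfolding D_def by simp
  qed
  have coeff_zero: "\<forall>a<m. \<forall>b<n. coeff (Z $$ (a, b)) d = 0" for d
  proof (cases "d \<le> D")
    case True
    then show ?thesis
    proof (induction d rule: inc_induct)
      case base
      then show ?case using degree_less by (auto intro: coeff_eq_0)
    next
      case (step d)
      then show ?case by (auto simp: coeff_step)
    qed
  next
    case False
    then show ?thesis using degree_less by (meson coeff_eq_0 le_less_trans less_imp_le_nat not_le)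
  qed
  show ?thesis
  proof (rule eq_matI)
    fix a b assume "a < dim_row (0\<^sub>m m n :: 'a mat)" "b < dim_col (0\<^sub>m m n :: 'a mat)"
    then have ab: "a < m" "b < n" by auto
    show "K $$ (a, b) = 0\<^sub>m m n $$ (a, b)"
      using arg_cong[OF entry[OF ab], of "\<lambda>p. coeff p 0"] coeff_zero ab by (simp add: coeff_sum)
  qed (use K in auto)
qed

lemma smult_mat_cancel:
  fixes X Y :: "'a::idom mat"
  assumes "c \<noteq> 0" and X: "X \<in> carrier_mat m n" and Y: "Y \<in> carrier_mat m n"
    and eq: "c \<cdot>\<^sub>m X = c \<cdot>\<^sub>m Y"
  shows "X = Y"
proof (rule eq_matI)
  fix i j assume "i < dim_row Y" "j < dim_col Y"
  then show "X $$ (i, j) = Y $$ (i, j)"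
    using arg_cong[OF eq, of "\<lambda>Z. Z $$ (i, j)"] X Y \<open>c \<noteq> 0\<close> by auto
qed (use X Y in auto)

lemma index_mult3_mat:
  assumes X: "X \<in> carrier_mat n n" and Y: "Y \<in> carrier_mat n n" and Z: "Z \<in> carrier_mat n n"
    and i: "i < n" and j: "j < n"
  shows "(X * Y * Z) $$ (i, j) = (\<Sum>r = 0..<n. \<Sum>s = 0..<n. X $$ (i, r) * Y $$ (r, s) * Z $$ (s, j))"
  using X Y Z i j by (simp add: scalar_prod_def sum_distrib_left mult.assoc)

lemma adj_mat_intertwines_transpose:
  fixes K M :: "'a::idom mat"
  assumes K: "K \<in> carrier_mat n n" and M: "M \<in> carrier_mat n n" and det0: "det M \<noteq> 0"
    and KM: "K * M = transpose_mat M * K"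
  shows "K * adj_mat M = transpose_mat (adj_mat M) * K"
proof -
  define R where "R = adj_mat M"
  define f where "f = det M"
  have R: "R \<in> carrier_mat n n" and MR: "M * R = f \<cdot>\<^sub>m 1\<^sub>m n"
    using adj_mat[OF M] unfolding R_def f_def by auto
  have "f \<cdot>\<^sub>m (transpose_mat R * K) = transpose_mat R * K * (M * R)"
    unfolding MR by (subst mult_smult_distrib[of _ n n]) (use R K in auto)
  also have "\<dots> = transpose_mat R * (K * M) * R"
    using R K M by (simp add: assoc_mult_mat[of _ n n _ n _ n])
  also have "\<dots> = transpose_mat (M * R) * (K * R)"
    using R K M by (simp add: KM transpose_mult[of _ n n] assoc_mult_mat[of _ n n _ n _ n])
  also have "\<dots> = f \<cdot>\<^sub>m (K * R)"
  proof -
    have one: "transpose_mat (f \<cdot>\<^sub>m 1\<^sub>m n) = f \<cdot>\<^sub>m 1\<^sub>m n" by (rule eq_matI) auto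
    have "f \<cdot>\<^sub>m 1\<^sub>m n * (K * R) = f \<cdot>\<^sub>m (K * R)"
      by (subst mult_smult_assoc_mat[of _ n n]) (use R K in auto)
    then show ?thesis unfolding MR one .
  qed
  finally show ?thesis
    using smult_mat_cancel[of f "K * R" n n] R K det0 unfolding R_def f_def by simp
qed

lemma det_dvd_adj_mat_square_minus_trace:
  fixes M :: "'a::idom mat"
  assumes M: "M \<in> carrier_mat n n" and det0: "det M \<noteq> 0" and a: "a < n" and b: "b < n"
  shows "det M dvd (adj_mat M * adj_mat M) $$ (a, b) - (\<Sum>c = 0..<n. adj_mat M $$ (c, c)) * adj_mat M $$ (a, b)"
proof -
  have R: "adj_mat M \<in> carrier_mat n n" using adj_mat[OF M] by simp
  have "(adj_mat M * adj_mat M) $$ (a, b) - (\<Sum>c = 0..<n. adj_mat M $$ (c, c)) * adj_mat M $$ (a, b)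
      = (\<Sum>c = 0..<n. adj_mat M $$ (a, c) * adj_mat M $$ (c, b) - adj_mat M $$ (c, c) * adj_mat M $$ (a, b))"
    using R a b by (simp add: scalar_prod_def sum_subtractf sum_distrib_right)
  also have "det M dvd \<dots>"
    using a b by (intro dvd_sum det_dvd_adj_mat_minor[OF M det0]) auto
  finally show ?thesis .
qed

lemma det_dvd_double_adj_mat_congruence:
  fixes K M :: "'a::idom mat"
  assumes M: "M \<in> carrier_mat n n" and det0: "det M \<noteq> 0" and K: "K \<in> carrier_mat n n"
    and skew: "transpose_mat K = - K" and a: "a < n" and b: "b < n"
  shows "det M dvd 2 * (transpose_mat (adj_mat M) * K * adj_mat M) $$ (a, b)"
proof -
  define R where "R = adj_mat M"
  have R: "R \<in> carrier_mat n n" using adj_mat[OF M] unfolding R_def by simp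
  have K_swap: "K $$ (c, d) = - K $$ (d, c)" if "c < n" "d < n" for c d
    using arg_cong[OF skew, of "\<lambda>X. X $$ (d, c)"] K that by simp
  define N where "N = (\<Sum>d = 0..<n. \<Sum>c = 0..<n. K $$ (d, c) * (R $$ (d, a) * R $$ (c, b)))"
  have RT: "transpose_mat R \<in> carrier_mat n n" using R by simp
  have N: "(transpose_mat R * K * R) $$ (a, b) = N"
    unfolding N_def index_mult3_mat[OF RT K R a b]
  proof (intro sum.cong refl)
    fix d c assume "d \<in> {0..<n}" "c \<in> {0..<n}"
    then show "transpose_mat R $$ (a, d) * K $$ (d, c) * R $$ (c, b) = K $$ (d, c) * (R $$ (d, a) * R $$ (c, b))"
      using R a by (simp add: ac_simps)
  qed
  have "(\<Sum>d = 0..<n. \<Sum>c = 0..<n. K $$ (d, c) * (R $$ (c, a) * R $$ (d, b)))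
      = (\<Sum>d = 0..<n. \<Sum>c = 0..<n. K $$ (c, d) * (R $$ (d, a) * R $$ (c, b)))"
    by (rule sum.swap)
  also have "\<dots> = (\<Sum>d = 0..<n. \<Sum>c = 0..<n. - (K $$ (d, c) * (R $$ (d, a) * R $$ (c, b))))"
  proof (intro sum.cong refl)
    fix d c assume "d \<in> {0..<n}" "c \<in> {0..<n}"
    then show "K $$ (c, d) * (R $$ (d, a) * R $$ (c, b)) = - (K $$ (d, c) * (R $$ (d, a) * R $$ (c, b)))"
      using K_swap[of c d] by simp
  qed
  also have "\<dots> = - N" unfolding N_def by (simp only: sum_negf)
  finally have T: "(\<Sum>d = 0..<n. \<Sum>c = 0..<n. K $$ (d, c) * (R $$ (c, a) * R $$ (d, b))) = - N" .
  have "N + N = N - (\<Sum>d = 0..<n. \<Sum>c = 0..<n. K $$ (d, c) * (R $$ (c, a) * R $$ (d, b)))"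
    unfolding T by simp
  also have "\<dots> = (\<Sum>d = 0..<n. \<Sum>c = 0..<n.
      K $$ (d, c) * (R $$ (d, a) * R $$ (c, b) - R $$ (c, a) * R $$ (d, b)))"
    unfolding N_def by (simp only: right_diff_distrib sum_subtractf)
  also have "det M dvd \<dots>"
    using a b unfolding R_def by (intro dvd_sum dvd_mult det_dvd_adj_mat_minor[OF M det0]) auto
  finally show ?thesis unfolding mult_2 R_def[symmetric] N .
qed

text \<open>The library's \<open>coprime_dvd_mult_right_iff\<close> needs a \<open>semiring_gcd\<close> instance, which
  \<open>'a poly\<close> has only for factorial coefficient rings; here the Bezout argument is done by hand.\<close>
lemma poly_coprime_dvd_mult_cancel:
  fixes f g x :: "'a::field poly"
  assumes cp: "coprime f g" and dvd: "f dvd g * x"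
  shows "f dvd x"
proof (cases "f = 0")
  case True
  then show ?thesis using cp dvd by auto
next
  case False
  define S where "S = {h. h \<noteq> 0 \<and> (\<exists>p q. h = p * f + q * g)}"
  have "f \<in> S" unfolding S_def using False by (auto intro: exI[of _ 1] exI[of _ 0])
  then obtain h where "h \<in> S" and h_min: "\<And>h'. h' \<in> S \<Longrightarrow> degree h \<le> degree h'"
    using ex_has_least_nat[of "\<lambda>h. h \<in> S" f degree] by blast
  then obtain p q where h: "h = p * f + q * g" and h0: "h \<noteq> 0" unfolding S_def by auto
  text \<open>A combination of minimal degree divides every combination, since its remainder is
    again a combination of smaller degree.\<close>
  have h_dvd: "h dvd p' * f + q' * g" for p' q'
  proof (rule ccontr)
    assume "\<not> h dvd p' * f + q' * g"
    then have r0: "(p' * f + q' * g) mod h \<noteq> 0" by (simp add: mod_eq_0_iff_dvd)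
    have "(p' * f + q' * g) mod h = (p' * f + q' * g) - ((p' * f + q' * g) div h) * h"
      by (simp add: minus_div_mult_eq_mod)
    also have "\<dots> = (p' - ((p' * f + q' * g) div h) * p) * f + (q' - ((p' * f + q' * g) div h) * q) * g"
      unfolding h by (simp add: algebra_simps)
    finally have "(p' * f + q' * g) mod h \<in> S" unfolding S_def using r0 by blast
    then have "degree h \<le> degree ((p' * f + q' * g) mod h)" by (rule h_min)
    moreover have "degree ((p' * f + q' * g) mod h) < degree h" using h0 r0 by (rule degree_mod_less')
    ultimately show False by simp
  qed
  have "is_unit h"
    using cp h_dvd[of 1 0] h_dvd[of 0 1] by (simp add: coprime_def)
  moreover have "x * h = (x * p) * f + q * (g * x)"
    unfolding h by (simp add: algebra_simps)
  then have "f dvd x * h"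
    using dvd by (simp add: dvd_add)
  ultimately show ?thesis by (simp add: dvd_mult_unit_iff)
qed

text \<open>Modulo \<open>f = det (x I - A)\<close>, Jacobi's theorem gives \<open>R\<^sup>2 \<equiv> tr(R) R = f' R\<close> and
  \<open>R\<^sup>T L R \<equiv> - R\<^sup>T L R\<close>; since \<open>L R R = R\<^sup>T L R\<close>, this yields \<open>f dvd f' (L R)\<close>.\<close>
lemma char_poly_dvd_skew_intertwiner_times_adj:
  fixes A :: "'a::field_char_0 mat" and L :: "'a poly mat"
  assumes A: "A \<in> carrier_mat n n" and rs: "regular_semisimple A"
    and L: "L \<in> carrier_mat n n" and skew: "transpose_mat L = - L"
    and LM: "L * char_poly_matrix A = transpose_mat (char_poly_matrix A) * L"
    and a: "a < n" and b: "b < n"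
  shows "char_poly A dvd (L * adj_mat (char_poly_matrix A)) $$ (a, b)"
proof -
  define M where "M = char_poly_matrix A"
  define R where "R = adj_mat M"
  define f where "f = char_poly A"
  have M: "M \<in> carrier_mat n n" unfolding M_def using A by simp
  have R: "R \<in> carrier_mat n n" unfolding R_def using adj_mat[OF M] by simp
  have det_M: "det M = f" unfolding M_def f_def char_poly_def ..
  have f0: "f \<noteq> 0" using degree_monic_char_poly[OF A] unfolding f_def by auto
  have trace: "pderiv f = (\<Sum>d = 0..<n. R $$ (d, d))"
    unfolding f_def R_def M_def trace_adj_char_poly_matrix[OF A] ..
  have LR: "L * R = transpose_mat R * L"
    unfolding R_def by (rule adj_mat_intertwines_transpose[OF L M]) (use f0 det_M LM M_def in auto)
  have "L * (R * R) = L * R * R" by (rule assoc_mult_mat[symmetric]) (use L R in auto)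
  also have "\<dots> = transpose_mat R * L * R" unfolding LR ..
  finally have LRR: "L * (R * R) = transpose_mat R * L * R" .
  have "f dvd (transpose_mat R * L * R) $$ (a, b) + (transpose_mat R * L * R) $$ (a, b)"
    using det_dvd_double_adj_mat_congruence[OF M _ L skew a b] f0 det_M unfolding R_def mult_2 by simp
  then have "f dvd Polynomial.smult (1 / 2)
      ((transpose_mat R * L * R) $$ (a, b) + (transpose_mat R * L * R) $$ (a, b))"
    by (rule dvd_smult)
  also have "\<dots> = Polynomial.smult (1 / 2 + 1 / 2) ((transpose_mat R * L * R) $$ (a, b))"
    by (simp only: smult_add_right smult_add_left)
  finally have f_dvd_LRR: "f dvd (L * (R * R)) $$ (a, b)"
    unfolding LRR by simp
  have "(L * (R * R)) $$ (a, b) - pderiv f * (L * R) $$ (a, b)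
      = (\<Sum>c = 0..<n. L $$ (a, c) * (R * R) $$ (c, b)) - pderiv f * (\<Sum>c = 0..<n. L $$ (a, c) * R $$ (c, b))"
    using L R a b by (simp add: scalar_prod_def)
  also have "\<dots> = (\<Sum>c = 0..<n. L $$ (a, c) * ((R * R) $$ (c, b) - pderiv f * R $$ (c, b)))"
    by (simp add: right_diff_distrib sum_subtractf sum_distrib_left mult.left_commute)
  also have "f dvd \<dots>"
    using b det_dvd_adj_mat_square_minus_trace[OF M] f0 det_M
    unfolding R_def trace by (intro dvd_sum dvd_mult) auto
  finally have "f dvd pderiv f * (L * R) $$ (a, b)"
    using f_dvd_LRR by (metis dvd_diff_commute dvd_add_right_iff diff_add_cancel)
  then show ?thesis
    using rs poly_coprime_dvd_mult_cancel unfolding regular_semisimple_def f_def M_def R_def by blast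
qed

lemma skew_intertwiner_of_regular_semisimple_eq_0:
  fixes A K :: "'a::field_char_0 mat"
  assumes A: "A \<in> carrier_mat n n" and rs: "regular_semisimple A" and K: "K \<in> carrier_mat n n"
    and skew: "transpose_mat K = - K" and KA: "K * A = transpose_mat A * K"
  shows "K = 0\<^sub>m n n"
proof -
  define L where "L = map_mat (\<lambda>x. [:x:]) K"
  define M where "M = char_poly_matrix A"
  define f where "f = char_poly A"
  have L: "L \<in> carrier_mat n n" and M: "M \<in> carrier_mat n n"
    unfolding L_def M_def using K A by auto
  have R: "adj_mat M \<in> carrier_mat n n" using adj_mat[OF M] by simp
  have f0: "f \<noteq> 0" using degree_monic_char_poly[OF A] unfolding f_def by auto
  have skew_L: "transpose_mat L = - L"
  proof (rule eq_matI)
    fix i j assume "i < dim_row (- L)" "j < dim_col (- L)"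
    then show "transpose_mat L $$ (i, j) = (- L) $$ (i, j)"
      using arg_cong[OF skew, of "\<lambda>X. X $$ (i, j)"] K by (simp add: L_def)
  qed (use K in \<open>auto simp: L_def\<close>)
  have LM: "L * M = transpose_mat M * L"
    unfolding L_def M_def by (rule const_intertwiner_char_poly_matrix[OF K A KA])
  obtain Z where Z: "Z \<in> carrier_mat n n" and LR: "L * adj_mat M = f \<cdot>\<^sub>m Z"
  proof
    show "map_mat (\<lambda>p. p div f) (L * adj_mat M) \<in> carrier_mat n n" using L R by simp
    show "L * adj_mat M = f \<cdot>\<^sub>m map_mat (\<lambda>p. p div f) (L * adj_mat M)"
      using char_poly_dvd_skew_intertwiner_times_adj[OF A rs L skew_L, folded M_def f_def] LM L R
      by (intro eq_matI) auto
  qed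
  have "f \<cdot>\<^sub>m (Z * M) = L * adj_mat M * M"
    using Z M by (simp add: LR mult_smult_assoc_mat)
  also have "\<dots> = L * (f \<cdot>\<^sub>m 1\<^sub>m n)"
    using adj_mat[OF M] L M unfolding f_def M_def char_poly_def by (simp add: assoc_mult_mat[of _ n n _ n _ n])
  also have "\<dots> = f \<cdot>\<^sub>m L"
    using L by (subst mult_smult_distrib[of L n n "1\<^sub>m n" n]) auto
  finally have "Z * char_poly_matrix A = map_mat (\<lambda>x. [:x:]) K"
    using smult_mat_cancel[OF f0, of "Z * M" n n L] Z M L unfolding L_def M_def by simp
  then show ?thesis by (rule const_left_multiple_of_char_poly_matrix_eq_0[OF Z A K])
qed

lemma intertwiner_of_regular_semisimple_symmetric:
  fixes A S :: "'a::field_char_0 mat"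
  assumes A: "A \<in> carrier_mat n n" and rs: "regular_semisimple A" and S: "S \<in> carrier_mat n n"
    and SA: "S * A = transpose_mat A * S"
  shows "transpose_mat S = S"
proof -
  define K where "K = S - transpose_mat S"
  have K: "K \<in> carrier_mat n n" unfolding K_def using S by auto
  have "transpose_mat S * A = transpose_mat A * transpose_mat S"
    using arg_cong[OF SA, of transpose_mat] S A by (simp add: transpose_mult[of _ n n])
  then have "K * A = transpose_mat A * K"
    using S A SA unfolding K_def by (simp add: minus_mult_distrib_mat[of _ n n] mult_minus_distrib_mat[of _ n n])
  moreover have "transpose_mat K = - K"
    unfolding K_def by (rule eq_matI) (use S in auto)
  ultimately have "K = 0\<^sub>m n n"
    using skew_intertwiner_of_regular_semisimple_eq_0[OF A rs K] by blast
  show ?thesis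
  proof (rule eq_matI)
    fix i j assume "i < dim_row S" "j < dim_col S"
    then show "transpose_mat S $$ (i, j) = S $$ (i, j)"
      using arg_cong[OF \<open>K = 0\<^sub>m n n\<close>, of "\<lambda>X. X $$ (j, i)"] S unfolding K_def by auto
  qed (use S in auto)
qed

lemma minv_GLn:
  assumes "A \<in> GLn n"
  shows "minv n A \<in> carrier_mat n n" and "A * minv n A = 1\<^sub>m n" and "minv n A * A = 1\<^sub>m n"
proof -
  from assms have A: "A \<in> carrier_mat n n" and "invertible_mat A" unfolding GLn_def by auto
  then obtain B where AB': "A * B = 1\<^sub>m (dim_row A)" and BA': "B * A = 1\<^sub>m (dim_row B)"
    unfolding invertible_mat_def inverts_mat_def by auto
  have B: "B \<in> carrier_mat n n"
    using arg_cong[OF AB', of dim_col] arg_cong[OF BA', of dim_col] A by auto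
  have AB: "A * B = 1\<^sub>m n" and BA: "B * A = 1\<^sub>m n" using AB' BA' A B by auto
  have "minv n A = B" unfolding minv_def
  proof (rule the_equality)
    fix C assume "C \<in> carrier_mat n n \<and> A * C = 1\<^sub>m n \<and> C * A = 1\<^sub>m n"
    then have C: "C \<in> carrier_mat n n" and CA: "C * A = 1\<^sub>m n" by auto
    have "C = C * (A * B)" using C AB by simp
    also have "\<dots> = (C * A) * B" using C A B by (rule assoc_mult_mat[symmetric])
    finally show "C = B" using CA B by simp
  qed (use AB BA B in auto)
  then show "minv n A \<in> carrier_mat n n" "A * minv n A = 1\<^sub>m n" "minv n A * A = 1\<^sub>m n"
    using AB BA B by auto
qed

lemma GLn_carrier: "A \<in> GLn n \<Longrightarrow> A \<in> carrier_mat n n"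
  unfolding GLn_def by auto

lemma GLnI:
  fixes A :: "'a::field mat"
  assumes A: "A \<in> carrier_mat n n" and B: "B \<in> carrier_mat n n" and AB: "A * B = 1\<^sub>m n"
  shows "A \<in> GLn n"
  using A B AB mat_mult_left_right_inverse[OF A B AB]
  unfolding GLn_def invertible_mat_def inverts_mat_def by auto

lemma GLn_mult:
  fixes A B :: "'a::field mat"
  assumes A: "A \<in> GLn n" and B: "B \<in> GLn n"
  shows "A * B \<in> GLn n"
proof (rule GLnI)
  note A' = GLn_carrier[OF A] minv_GLn[OF A] and B' = GLn_carrier[OF B] minv_GLn[OF B]
  have "(A * B) * (minv n B * minv n A) = A * (B * (minv n B * minv n A))"
    using A' B' by (intro assoc_mult_mat) auto
  also have "B * (minv n B * minv n A) = (B * minv n B) * minv n A"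
    using A' B' by (intro assoc_mult_mat[symmetric]) auto
  finally show "(A * B) * (minv n B * minv n A) = 1\<^sub>m n"
    using A' B' by simp
qed (use GLn_carrier[OF A] GLn_carrier[OF B] minv_GLn[OF A] minv_GLn[OF B] in auto)

lemma GLn_of_det_nonzero:
  fixes A :: "'a::field mat"
  assumes A: "A \<in> carrier_mat n n" and det0: "det A \<noteq> 0"
  shows "A \<in> GLn n"
proof (rule GLnI[OF A])
  show "A * ((1 / det A) \<cdot>\<^sub>m adj_mat A) = 1\<^sub>m n"
    using adj_mat[OF A] A det0 by (subst mult_smult_distrib[of _ n n _ n]) (auto intro!: eq_matI)
qed (use adj_mat[OF A] in auto)

section \<open>Conjugation and skew-Hermitian forms\<close>

lemma quad_conj_field_hom: "quad_conj \<sigma> \<Longrightarrow> field_hom \<sigma>"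
  unfolding quad_conj_def
  by unfold_locales (auto, metis add_cancel_right_right)

lemma mbar_carrier [simp]: "mbar \<sigma> A \<in> carrier_mat m n \<longleftrightarrow> A \<in> carrier_mat m n"
  unfolding mbar_def by simp

lemma mstar_carrier [simp]: "mstar \<sigma> A \<in> carrier_mat n m \<longleftrightarrow> A \<in> carrier_mat m n"
  unfolding mstar_def by auto

lemma index_mstar [simp]: "A \<in> carrier_mat m n \<Longrightarrow> i < n \<Longrightarrow> j < m \<Longrightarrow> mstar \<sigma> A $$ (i, j) = \<sigma> (A $$ (j, i))"
  unfolding mstar_def by simp

lemma mstar_mbar: "mstar \<sigma> A = transpose_mat (mbar \<sigma> A)"
  unfolding mstar_def mbar_def ..

definition sesq_form :: "('a::field \<Rightarrow> 'a) \<Rightarrow> 'a mat \<Rightarrow> nat \<Rightarrow> (nat \<Rightarrow> 'a) \<Rightarrow> (nat \<Rightarrow> 'a) \<Rightarrow> 'a" where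
  "sesq_form \<sigma> H N u v = (\<Sum>r = 0..<N. \<Sum>c = 0..<N. \<sigma> (u r) * H $$ (r, c) * v c)"

lemma mstar_mat_delete: "mstar \<sigma> (mat_delete A i j) = mat_delete (mstar \<sigma> A) j i"
  unfolding mstar_def mat_delete_def by (rule eq_matI) auto

lemma block_diagonal_of_first_row:
  assumes H: "H \<in> carrier_mat (Suc n) (Suc n)"
    and row: "\<And>c. c < Suc n \<Longrightarrow> H $$ (0, c) = (if c = 0 then h else 0)"
    and col: "\<And>r. 0 < r \<Longrightarrow> r < Suc n \<Longrightarrow> H $$ (r, 0) = 0"
  shows "H = four_block_mat (mat 1 1 (\<lambda>_. h)) (0\<^sub>m 1 n) (0\<^sub>m n 1) (mat_delete H 0 0)"
proof (rule eq_matI)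
  fix i j assume "i < dim_row (four_block_mat (mat 1 1 (\<lambda>_. h)) (0\<^sub>m 1 n) (0\<^sub>m n 1) (mat_delete H 0 0))"
    "j < dim_col (four_block_mat (mat 1 1 (\<lambda>_. h)) (0\<^sub>m 1 n) (0\<^sub>m n 1) (mat_delete H 0 0))"
  then have ij: "i < Suc n" "j < Suc n" using H by auto
  show "H $$ (i, j) = four_block_mat (mat 1 1 (\<lambda>_. h)) (0\<^sub>m 1 n) (0\<^sub>m n 1) (mat_delete H 0 0) $$ (i, j)"
    using ij H row[of j] col[of i] by (cases "i = 0"; cases "j = 0") (auto simp: mat_delete_def)
qed (use H in auto)

context
  fixes \<sigma> :: "'e::field \<Rightarrow> 'e"
  assumes conj: "quad_conj \<sigma>"
begin

interpretation conj: field_hom \<sigma> by (rule quad_conj_field_hom[OF conj])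

lemma conj_conj [simp]: "\<sigma> (\<sigma> x) = x"
  using conj unfolding quad_conj_def by auto

lemma mbar_mult: "A \<in> carrier_mat m n \<Longrightarrow> B \<in> carrier_mat n k \<Longrightarrow> mbar \<sigma> (A * B) = mbar \<sigma> A * mbar \<sigma> B"
  unfolding mbar_def by (rule conj.mat_hom_mult)

lemma mbar_mbar [simp]: "mbar \<sigma> (mbar \<sigma> A) = A"
  unfolding mbar_def by (rule eq_matI) auto

lemma transpose_mbar: "transpose_mat (mbar \<sigma> A) = mbar \<sigma> (transpose_mat A)"
  unfolding mbar_def by (rule eq_matI) auto

lemma mstar_mult: "A \<in> carrier_mat m n \<Longrightarrow> B \<in> carrier_mat n k \<Longrightarrow> mstar \<sigma> (A * B) = mstar \<sigma> B * mstar \<sigma> A"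
  unfolding mstar_mbar by (simp add: mbar_mult transpose_mult[of _ m n])

lemma mstar_mstar [simp]: "mstar \<sigma> (mstar \<sigma> A) = A"
  unfolding mstar_def by (rule eq_matI) auto

lemma mstar_one [simp]: "mstar \<sigma> (1\<^sub>m n) = 1\<^sub>m n"
  unfolding mstar_def by (rule eq_matI) auto

lemma mstar_congruence:
  assumes "P \<in> carrier_mat n m" and "H \<in> carrier_mat n n"
  shows "mstar \<sigma> (mstar \<sigma> P * H * P) = mstar \<sigma> P * mstar \<sigma> H * P"
  using assms by (simp add: mstar_mult[of "mstar \<sigma> P" m n "H * P" m] mstar_mult[of H n n P m])

lemma sesq_form_expand:
  "sesq_form \<sigma> H N (\<lambda>r. u r + c * w r) (\<lambda>r. u r + c * w r)
    = sesq_form \<sigma> H N u u + c * sesq_form \<sigma> H N u w + \<sigma> c * sesq_form \<sigma> H N w u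
      + \<sigma> c * c * sesq_form \<sigma> H N w w"
  unfolding sesq_form_def
  by (simp add: conj.hom_add conj.hom_mult algebra_simps sum.distrib sum_distrib_left)

lemma sesq_form_skew:
  assumes H: "H \<in> carrier_mat N N" and skew: "mstar \<sigma> H = - H"
  shows "sesq_form \<sigma> H N w u = - \<sigma> (sesq_form \<sigma> H N u w)"
proof -
  have H_swap: "\<sigma> (H $$ (r, c)) = - H $$ (c, r)" if "r < N" "c < N" for r c
    using arg_cong[OF skew, of "\<lambda>X. X $$ (c, r)"] H that by simp
  have "\<sigma> (sesq_form \<sigma> H N u w) = (\<Sum>r = 0..<N. \<Sum>c = 0..<N. u r * \<sigma> (H $$ (r, c)) * \<sigma> (w c))"
    unfolding sesq_form_def by (simp add: conj.hom_sum conj.hom_mult conj_conj)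
  also have "\<dots> = (\<Sum>r = 0..<N. \<Sum>c = 0..<N. - (\<sigma> (w c) * H $$ (c, r) * u r))"
  proof (intro sum.cong refl)
    fix r c assume "r \<in> {0..<N}" "c \<in> {0..<N}"
    then show "u r * \<sigma> (H $$ (r, c)) * \<sigma> (w c) = - (\<sigma> (w c) * H $$ (c, r) * u r)"
      using H_swap[of r c] by (simp add: ac_simps)
  qed
  also have "\<dots> = - (\<Sum>c = 0..<N. \<Sum>r = 0..<N. \<sigma> (w c) * H $$ (c, r) * u r)"
    by (subst sum.swap) (simp only: sum_negf)
  finally show ?thesis unfolding sesq_form_def by simp
qed

lemma sesq_form_of_bool:
  assumes "i < N" and "j < N"
  shows "sesq_form \<sigma> H N (\<lambda>r. of_bool (r = i)) (\<lambda>r. of_bool (r = j)) = H $$ (i, j)"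
proof -
  have conj_of_bool: "\<sigma> (of_bool b) = of_bool b" for b by (cases b) auto
  show ?thesis
    using assms by (simp add: sesq_form_def conj_of_bool of_bool_def if_distrib[where f = \<sigma>] if_distrib[where f = "\<lambda>x. _ * x"]
        if_distrib[where f = "\<lambda>x. x * _"] cong: if_cong)
qed

text \<open>Polarisation for skew-Hermitian forms; it needs a scalar \<open>\<epsilon>\<close> with \<open>\<sigma> \<epsilon> \<noteq> \<epsilon>\<close>.\<close>
lemma skew_hermitian_form_eq_0_if_isotropic:
  assumes H: "H \<in> carrier_mat N N" and skew: "mstar \<sigma> H = - H"
    and iso: "\<And>x. sesq_form \<sigma> H N x x = 0"
  shows "sesq_form \<sigma> H N u w = 0"
proof -
  obtain \<epsilon> where \<epsilon>: "\<sigma> \<epsilon> \<noteq> \<epsilon>" using conj unfolding quad_conj_def by auto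
  define b where "b = sesq_form \<sigma> H N u w"
  have "c * b = \<sigma> c * \<sigma> b" for c
    using iso[of "\<lambda>r. u r + c * w r"] sesq_form_skew[OF H skew, of w u]
    unfolding sesq_form_expand iso b_def by simp
  from this[of 1] this[of \<epsilon>] have "(\<epsilon> - \<sigma> \<epsilon>) * b = 0"
    by (simp add: algebra_simps)
  then show ?thesis using \<epsilon> unfolding b_def by simp
qed

lemma skew_hermitian_exists_anisotropic:
  assumes two: "(2::'e) \<noteq> 0" and H: "H \<in> carrier_mat N N" and skew: "mstar \<sigma> H = - H"
    and nz: "i < N" "j < N" "H $$ (i, j) \<noteq> 0"
  shows "\<exists>x. x 0 \<noteq> 0 \<and> sesq_form \<sigma> H N x x \<noteq> 0"
proof -
  let ?q = "\<lambda>x. sesq_form \<sigma> H N x x"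
  let ?e0 = "\<lambda>r. of_bool (r = 0) :: 'e"
  obtain y where y: "?q y \<noteq> 0"
    using skew_hermitian_form_eq_0_if_isotropic[OF H skew] sesq_form_of_bool[OF nz(1,2)] nz(3) by metis
  text \<open>If \<open>y 0 = 0\<close>, then \<open>q(y + e0) + q(y - e0) = 2 (q y + q e0)\<close> shows that one of
    \<open>y + e0\<close>, \<open>y - e0\<close>, \<open>e0\<close> is anisotropic.\<close>
  have sum_eq: "?q (\<lambda>r. y r + 1 * ?e0 r) + ?q (\<lambda>r. y r + (- 1) * ?e0 r) = 2 * (?q y + ?q ?e0)"
    unfolding sesq_form_expand by (simp add: conj.hom_uminus)
  show ?thesis
  proof (rule ccontr)
    assume none: "\<not> ?thesis"
    then have y0: "y 0 = 0" using y by blast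
    have iso: "?q x = 0" if "x 0 \<noteq> 0" for x using none that by blast
    have "2 * (?q y + ?q ?e0) = 0"
      using sum_eq iso[of "\<lambda>r. y r + 1 * ?e0 r"] iso[of "\<lambda>r. y r + (- 1) * ?e0 r"] y0 by simp
    then have "?q y + ?q ?e0 = 0" using two by (simp only: mult_eq_0_iff) simp
    then show False using iso[of ?e0] y by simp
  qed
qed

lemma skew_hermitian_congruence:
  assumes P: "P \<in> carrier_mat n m" and H: "H \<in> carrier_mat n n" and skew: "mstar \<sigma> H = - H"
  shows "mstar \<sigma> (mstar \<sigma> P * H * P) = - (mstar \<sigma> P * H * P)"
  unfolding mstar_congruence[OF P H] skew using P H by (simp add: uminus_mult_left_mat uminus_mult_right_mat)

lemma congruence_mult:
  assumes P: "P \<in> carrier_mat n n" and Q: "Q \<in> carrier_mat n n" and H: "H \<in> carrier_mat n n"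
  shows "mstar \<sigma> (P * Q) * H * (P * Q) = mstar \<sigma> Q * (mstar \<sigma> P * H * P) * Q"
  using P Q H by (simp add: mstar_mult[OF P Q] assoc_mult_mat[of _ n n _ n _ n] mult_carrier_mat[of _ n n _ n])

lemma congruence_first_entry:
  assumes H: "H \<in> carrier_mat N N" and N: "0 < N" and x0: "x 0 \<noteq> 0"
  obtains T where "T \<in> GLn N" and "(mstar \<sigma> T * H * T) $$ (0, 0) = sesq_form \<sigma> H N x x"
proof
  define T where "T = mat N N (\<lambda>(r, c). if c = 0 then x r else of_bool (r = c))"
  have T: "T \<in> carrier_mat N N" unfolding T_def by simp
  have "det T = (\<Prod>i = 0..<N. T $$ (i, i))"
    using det_lower_triangular[OF _ T] T unfolding prod_list_diag_prod by (simp add: T_def)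
  also have "\<dots> = x 0"
    using N by (simp add: T_def prod.atLeast_Suc_lessThan)
  finally show "T \<in> GLn N" using x0 by (intro GLn_of_det_nonzero[OF T]) auto
  have "mstar \<sigma> T $$ (0, r) = \<sigma> (x r)" if "r < N" for r
    using index_mstar[OF T N that] that by (simp add: T_def)
  then show "(mstar \<sigma> T * H * T) $$ (0, 0) = sesq_form \<sigma> H N x x"
    using T H N unfolding sesq_form_def index_mult3_mat[OF mstar_carrier[THEN iffD2, OF T] H T N N]
    by (intro sum.cong refl) (simp add: T_def)
qed

lemma skew_hermitian_clear_first_row:
  assumes H: "H \<in> carrier_mat N N" and N: "0 < N" and h: "H $$ (0, 0) \<noteq> 0"
  obtains E where "E \<in> GLn N"
    and "\<And>c. c < N \<Longrightarrow> (mstar \<sigma> E * H * E) $$ (0, c) = (if c = 0 then H $$ (0, 0) else 0)"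
proof
  define E where "E = mat N N (\<lambda>(r, c). if r = c then 1 else if r = 0 then - (H $$ (0, c) / H $$ (0, 0)) else 0)"
  have E: "E \<in> carrier_mat N N" unfolding E_def by simp
  have "det E = (\<Prod>i = 0..<N. E $$ (i, i))"
    using det_upper_triangular[OF _ E] E unfolding prod_list_diag_prod
    by (simp add: E_def upper_triangular_def)
  also have "\<dots> = 1" by (simp add: E_def)
  finally show "E \<in> GLn N" by (intro GLn_of_det_nonzero[OF E]) auto
  have E_col0: "\<sigma> (E $$ (r, 0)) = of_bool (r = 0)" if "r < N" for r
    using that N by (simp add: E_def)
  fix c assume c: "c < N"
  have "(mstar \<sigma> E * H * E) $$ (0, c) = (\<Sum>r = 0..<N. of_bool (r = 0) * (\<Sum>s = 0..<N. H $$ (r, s) * E $$ (s, c)))"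
    unfolding index_mult3_mat[OF mstar_carrier[THEN iffD2, OF E] H E N c]
    using E N by (intro sum.cong refl) (simp add: E_col0 sum_distrib_left ac_simps)
  also have "\<dots> = (\<Sum>s = 0..<N. H $$ (0, s) * E $$ (s, c))"
    using N by (simp add: of_bool_def if_distrib[where f = "\<lambda>x. x * _"] cong: if_cong)
  also have "\<dots> = (\<Sum>s = 0..<N. (if s = c then H $$ (0, c) else 0)
      + (if s = 0 \<and> c \<noteq> 0 then - H $$ (0, 0) * (H $$ (0, c) / H $$ (0, 0)) else 0))"
    using c by (intro sum.cong refl) (auto simp: E_def)
  also have "\<dots> = (if c = 0 then H $$ (0, 0) else 0)"
    using c N h by (simp add: sum.distrib)
  finally show "(mstar \<sigma> E * H * E) $$ (0, c) = (if c = 0 then H $$ (0, 0) else 0)" .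
qed

lemma mstar_four_block_diag:
  assumes P: "P \<in> carrier_mat n n"
  shows "mstar \<sigma> (four_block_mat (1\<^sub>m 1) (0\<^sub>m 1 n) (0\<^sub>m n 1) P)
    = four_block_mat (1\<^sub>m 1) (0\<^sub>m 1 n) (0\<^sub>m n 1) (mstar \<sigma> P)"
  by (rule eq_matI) (use P in \<open>auto simp: mstar_def\<close>)

lemma four_block_diag_congruence:
  assumes P: "P \<in> carrier_mat n n" and B: "B \<in> carrier_mat 1 1" and H: "H \<in> carrier_mat n n"
  shows "mstar \<sigma> (four_block_mat (1\<^sub>m 1) (0\<^sub>m 1 n) (0\<^sub>m n 1) P) * four_block_mat B (0\<^sub>m 1 n) (0\<^sub>m n 1) H
      * four_block_mat (1\<^sub>m 1) (0\<^sub>m 1 n) (0\<^sub>m n 1) P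
    = four_block_mat B (0\<^sub>m 1 n) (0\<^sub>m n 1) (mstar \<sigma> P * H * P)"
proof -
  have sP: "mstar \<sigma> P \<in> carrier_mat n n" using P by simp
  have "four_block_mat (1\<^sub>m 1) (0\<^sub>m 1 n) (0\<^sub>m n 1) (mstar \<sigma> P) * four_block_mat B (0\<^sub>m 1 n) (0\<^sub>m n 1) H
      = four_block_mat B (0\<^sub>m 1 n) (0\<^sub>m n 1) (mstar \<sigma> P * H)"
    by (subst mult_four_block_mat[OF one_carrier_mat zero_carrier_mat zero_carrier_mat sP
          B zero_carrier_mat zero_carrier_mat H]) (use B H sP in auto)
  moreover have "four_block_mat B (0\<^sub>m 1 n) (0\<^sub>m n 1) (mstar \<sigma> P * H) * four_block_mat (1\<^sub>m 1) (0\<^sub>m 1 n) (0\<^sub>m n 1) P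
      = four_block_mat B (0\<^sub>m 1 n) (0\<^sub>m n 1) (mstar \<sigma> P * H * P)"
    by (subst mult_four_block_mat[OF B zero_carrier_mat zero_carrier_mat mult_carrier_mat[OF sP H]
          one_carrier_mat zero_carrier_mat zero_carrier_mat P]) (use B H sP P in auto)
  ultimately show ?thesis unfolding mstar_four_block_diag[OF P] by simp
qed

lemma four_block_diag_GLn:
  assumes "P \<in> GLn n"
  shows "four_block_mat (1\<^sub>m 1) (0\<^sub>m 1 n) (0\<^sub>m n 1) P \<in> GLn (Suc n)"
proof (rule GLnI)
  note P = GLn_carrier[OF assms] minv_GLn[OF assms]
  show "four_block_mat (1\<^sub>m 1) (0\<^sub>m 1 n) (0\<^sub>m n 1) P * four_block_mat (1\<^sub>m 1) (0\<^sub>m 1 n) (0\<^sub>m n 1) (minv n P)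
    = 1\<^sub>m (Suc n)"
    by (subst mult_four_block_mat[OF one_carrier_mat zero_carrier_mat zero_carrier_mat P(1)
          one_carrier_mat zero_carrier_mat zero_carrier_mat P(2)]) (use P in auto)
qed (use GLn_carrier[OF assms] minv_GLn[OF assms] in auto)

lemma skew_hermitian_split_off_first:
  assumes two: "(2::'e) \<noteq> 0" and H: "H \<in> carrier_mat (Suc n) (Suc n)" and skew: "mstar \<sigma> H = - H"
    and nz: "i < Suc n" "j < Suc n" "H $$ (i, j) \<noteq> 0"
  obtains P h H' where "P \<in> GLn (Suc n)" and "H' \<in> carrier_mat n n" and "mstar \<sigma> H' = - H'"
    and "mstar \<sigma> P * H * P = four_block_mat (mat 1 1 (\<lambda>_. h)) (0\<^sub>m 1 n) (0\<^sub>m n 1) H'"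
proof -
  obtain x where "x 0 \<noteq> 0" and "sesq_form \<sigma> H (Suc n) x x \<noteq> 0"
    using skew_hermitian_exists_anisotropic[OF two H skew nz] by blast
  then obtain T where T: "T \<in> GLn (Suc n)" and h: "(mstar \<sigma> T * H * T) $$ (0, 0) \<noteq> 0"
    using congruence_first_entry[OF H] by (metis zero_less_Suc)
  define H1 where "H1 = mstar \<sigma> T * H * T"
  have H1: "H1 \<in> carrier_mat (Suc n) (Suc n)" unfolding H1_def using GLn_carrier[OF T] H by simp
  have skew1: "mstar \<sigma> H1 = - H1"
    unfolding H1_def by (rule skew_hermitian_congruence[OF GLn_carrier[OF T] H skew])
  obtain E where E: "E \<in> GLn (Suc n)"
    and row: "\<And>c. c < Suc n \<Longrightarrow> (mstar \<sigma> E * H1 * E) $$ (0, c) = (if c = 0 then H1 $$ (0, 0) else 0)"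
    using skew_hermitian_clear_first_row[OF H1] h unfolding H1_def by blast
  define H2 where "H2 = mstar \<sigma> E * H1 * E"
  have H2: "H2 \<in> carrier_mat (Suc n) (Suc n)" unfolding H2_def using GLn_carrier[OF E] H1 by simp
  have skew2: "mstar \<sigma> H2 = - H2"
    unfolding H2_def by (rule skew_hermitian_congruence[OF GLn_carrier[OF E] H1 skew1])
  have row2: "H2 $$ (0, c) = (if c = 0 then H1 $$ (0, 0) else 0)" if "c < Suc n" for c
    unfolding H2_def using row[OF that] .
  have col: "H2 $$ (r, 0) = 0" if "0 < r" "r < Suc n" for r
  proof -
    have "\<sigma> (H2 $$ (r, 0)) = - H2 $$ (0, r)"
      using arg_cong[OF skew2, of "\<lambda>X. X $$ (0, r)"] H2 that by simp
    then show ?thesis using row2[of r] that by simp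
  qed
  show ?thesis
  proof (rule that[OF GLn_mult[OF T E]])
    show "mat_delete H2 0 0 \<in> carrier_mat n n" using mat_delete_carrier[OF H2] by simp
    show "mstar \<sigma> (mat_delete H2 0 0) = - mat_delete H2 0 0"
      unfolding mstar_mat_delete skew2 by (rule eq_matI) (use H2 in \<open>auto simp: mat_delete_def\<close>)
    have "mstar \<sigma> (T * E) * H * (T * E) = H2"
      using GLn_carrier[OF T] GLn_carrier[OF E] H by (simp add: congruence_mult H1_def H2_def)
    also have "\<dots> = four_block_mat (mat 1 1 (\<lambda>_. H1 $$ (0, 0))) (0\<^sub>m 1 n) (0\<^sub>m n 1) (mat_delete H2 0 0)"
      by (rule block_diagonal_of_first_row[OF H2]) (use row2 col in auto)
    finally show "mstar \<sigma> (T * E) * H * (T * E)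
        = four_block_mat (mat 1 1 (\<lambda>_. H1 $$ (0, 0))) (0\<^sub>m 1 n) (0\<^sub>m n 1) (mat_delete H2 0 0)" .
  qed
qed

lemma skew_hermitian_congruent_to_symmetric:
  assumes two: "(2::'e) \<noteq> 0" and H: "H \<in> carrier_mat n n" and skew: "mstar \<sigma> H = - H"
  shows "\<exists>P \<in> GLn n. transpose_mat (mstar \<sigma> P * H * P) = mstar \<sigma> P * H * P"
  using H skew
proof (induction n arbitrary: H)
  case 0
  have "1\<^sub>m 0 \<in> GLn 0" by (rule GLnI[of _ 0 "1\<^sub>m 0"]) auto
  moreover have "transpose_mat (mstar \<sigma> (1\<^sub>m 0) * H * 1\<^sub>m 0) = mstar \<sigma> (1\<^sub>m 0) * H * 1\<^sub>m 0"
    by (rule eq_matI) (use 0 in auto)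
  ultimately show ?case by blast
next
  case (Suc n)
  note H = Suc.prems(1) and skew = Suc.prems(2)
  show ?case
  proof (cases "\<forall>i<Suc n. \<forall>j<Suc n. H $$ (i, j) = 0")
    case True
    have "1\<^sub>m (Suc n) \<in> GLn (Suc n)" by (rule GLnI[of _ _ "1\<^sub>m (Suc n)"]) auto
    moreover have "transpose_mat H = H" by (rule eq_matI) (use True H in auto)
    ultimately show ?thesis using H by (intro bexI[of _ "1\<^sub>m (Suc n)"]) simp_all
  next
    case False
    then obtain P h H' where P: "P \<in> GLn (Suc n)" and H': "H' \<in> carrier_mat n n" "mstar \<sigma> H' = - H'"
      and split: "mstar \<sigma> P * H * P = four_block_mat (mat 1 1 (\<lambda>_. h)) (0\<^sub>m 1 n) (0\<^sub>m n 1) H'"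
      using skew_hermitian_split_off_first[OF two H skew] by blast
    obtain P' where P': "P' \<in> GLn n" and sym': "transpose_mat (mstar \<sigma> P' * H' * P') = mstar \<sigma> P' * H' * P'"
      using Suc.IH[OF H'] by blast
    define Q where "Q = four_block_mat (1\<^sub>m 1) (0\<^sub>m 1 n) (0\<^sub>m n 1) P'"
    have Q: "Q \<in> GLn (Suc n)" unfolding Q_def by (rule four_block_diag_GLn[OF P'])
    have "mstar \<sigma> (P * Q) * H * (P * Q) = mstar \<sigma> Q * (mstar \<sigma> P * H * P) * Q"
      using GLn_carrier[OF P] GLn_carrier[OF Q] H by (rule congruence_mult)
    also have "\<dots> = four_block_mat (mat 1 1 (\<lambda>_. h)) (0\<^sub>m 1 n) (0\<^sub>m n 1) (mstar \<sigma> P' * H' * P')"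
      unfolding Q_def split by (rule four_block_diag_congruence[OF GLn_carrier[OF P'] _ H'(1)]) simp
    finally have "transpose_mat (mstar \<sigma> (P * Q) * H * (P * Q)) = mstar \<sigma> (P * Q) * H * (P * Q)"
      using sym' H'(1) GLn_carrier[OF P']
      by (auto simp: transpose_four_block_mat[of _ 1 1 _ n _ n] intro!: cong_four_block_mat eq_matI)
    then show ?thesis using GLn_mult[OF P Q] by blast
  qed
qed

lemma mstar_mbar_eq_transpose: "mstar \<sigma> (mbar \<sigma> A) = transpose_mat A"
  unfolding mstar_mbar by (simp add: mbar_mbar)

lemma skew_hermitian_congruent_to_transpose:
  assumes two: "(2::'e) \<noteq> 0" and \<beta>: "\<beta> \<in> carrier_mat n n" and skew: "mstar \<sigma> \<beta> = - \<beta>"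
  shows "\<exists>Q \<in> GLn n. mstar \<sigma> Q * \<beta> * Q = transpose_mat \<beta>"
proof -
  obtain P where P: "P \<in> GLn n" and sym: "transpose_mat (mstar \<sigma> P * \<beta> * P) = mstar \<sigma> P * \<beta> * P"
    using skew_hermitian_congruent_to_symmetric[OF two \<beta> skew] by blast
  define D where "D = mstar \<sigma> P * \<beta> * P"
  define R where "R = minv n P"
  have D: "D \<in> carrier_mat n n" unfolding D_def using GLn_carrier[OF P] \<beta> by simp
  have Pc: "P \<in> carrier_mat n n" and R: "R \<in> carrier_mat n n" and PR: "P * R = 1\<^sub>m n" and RP: "R * P = 1\<^sub>m n"
    using GLn_carrier[OF P] minv_GLn[OF P] unfolding R_def by auto
  text \<open>As \<open>D\<close> is symmetric, transposing \<open>\<beta> = R\<^sup>* D R\<close> gives \<open>\<beta>\<^sup>T = R\<^sup>T D conj(R)\<close>,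
    so \<open>Q = P conj(R)\<close> works.\<close>
  have "\<beta> = mstar \<sigma> R * D * R"
  proof -
    have "mstar \<sigma> R * D * R = mstar \<sigma> (P * R) * \<beta> * (P * R)"
      unfolding D_def using Pc R \<beta> by (simp add: congruence_mult)
    then show ?thesis using \<beta> by (simp add: PR mstar_one)
  qed
  then have "transpose_mat \<beta> = transpose_mat R * transpose_mat D * transpose_mat (mstar \<sigma> R)"
    using R D by (simp add: transpose_mult[of _ n n _ n] mult_carrier_mat[of _ n n _ n])
  also have "\<dots> = mstar \<sigma> (mbar \<sigma> R) * D * mbar \<sigma> R"
    using sym unfolding D_def[symmetric] by (simp add: mstar_mbar_eq_transpose mstar_mbar mbar_mbar)
  also have "\<dots> = mstar \<sigma> (P * mbar \<sigma> R) * \<beta> * (P * mbar \<sigma> R)"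
    unfolding D_def using Pc R \<beta> by (simp add: congruence_mult)
  finally have "mstar \<sigma> (P * mbar \<sigma> R) * \<beta> * (P * mbar \<sigma> R) = transpose_mat \<beta>" ..
  moreover have "P * mbar \<sigma> R \<in> GLn n"
  proof (intro GLn_mult[OF P] GLnI)
    have "mbar \<sigma> R * mbar \<sigma> P = mbar \<sigma> (R * P)" using R Pc by (rule mbar_mult[symmetric])
    also have "\<dots> = 1\<^sub>m n" unfolding RP by (rule eq_matI) (auto simp: mbar_def)
    finally show "mbar \<sigma> R * mbar \<sigma> P = 1\<^sub>m n" .
  qed (use R Pc in auto)
  ultimately show ?thesis by blast
qed

lemma h_beta_twisted_intertwiner:
  assumes \<beta>: "\<beta> \<in> GLn n" and A': "A' \<in> h_beta \<sigma> n \<beta>" and a: "a \<in> carrier_mat n n"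
    and A'_eq: "A' = mbar \<sigma> a * a"
  shows "(transpose_mat a * \<beta>) * A' = transpose_mat A' * (transpose_mat a * \<beta>)"
proof -
  have b: "\<beta> \<in> carrier_mat n n" and bi: "minv n \<beta> \<in> carrier_mat n n" and bib: "minv n \<beta> * \<beta> = 1\<^sub>m n"
    using GLn_carrier[OF \<beta>] minv_GLn[OF \<beta>] by auto
  have A'c: "A' \<in> carrier_mat n n" and A'_star: "mstar \<sigma> A' = \<beta> * A' * minv n \<beta>"
    using A' unfolding h_beta_def by auto
  have "mstar \<sigma> A' = mstar \<sigma> a * transpose_mat a"
    unfolding A'_eq using a by (simp add: mstar_mult[of _ n n] mstar_mbar_eq_transpose)
  then have "\<beta> * A' * minv n \<beta> = mstar \<sigma> a * transpose_mat a" using A'_star by simp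
  then have "mstar \<sigma> a * transpose_mat a * \<beta> = \<beta> * A' * minv n \<beta> * \<beta>" by simp
  also have "\<dots> = \<beta> * A'"
    using b bi bib A'c by (simp add: assoc_mult_mat[of _ n n _ n _ n] mult_carrier_mat[of _ n n _ n])
  finally have star_eq: "mstar \<sigma> a * transpose_mat a * \<beta> = \<beta> * A'" .
  have "transpose_mat A' * (transpose_mat a * \<beta>) = transpose_mat a * (mstar \<sigma> a * transpose_mat a * \<beta>)"
    unfolding A'_eq using a b
    by (simp add: transpose_mult[of _ n n] transpose_mbar mstar_mbar
        assoc_mult_mat[of _ n n _ n _ n] mult_carrier_mat[of _ n n _ n])
  also have "\<dots> = (transpose_mat a * \<beta>) * A'"
    unfolding star_eq using a b A'c by simp
  finally show ?thesis ..
qed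

lemma mstar_mult_transpose_of_symmetric:
  assumes \<beta>: "\<beta> \<in> carrier_mat n n" and skew: "mstar \<sigma> \<beta> = - \<beta>" and a: "a \<in> carrier_mat n n"
    and sym: "transpose_mat (transpose_mat a * \<beta>) = transpose_mat a * \<beta>"
  shows "mstar \<sigma> a * transpose_mat \<beta> = \<beta> * mbar \<sigma> a"
proof -
  have "transpose_mat \<beta> * a = transpose_mat a * \<beta>"
    using sym a \<beta> by (simp add: transpose_mult[of _ n n])
  then have "mbar \<sigma> (transpose_mat \<beta>) * mbar \<sigma> a = mbar \<sigma> (transpose_mat a) * mbar \<sigma> \<beta>"
    using a \<beta> by (simp flip: mbar_mult[of _ n n])
  moreover have conj_transpose: "mbar \<sigma> (transpose_mat \<beta>) = - \<beta>"
    using skew by (simp add: mstar_mbar transpose_mbar)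
  moreover have "mbar \<sigma> \<beta> = - transpose_mat \<beta>"
    using arg_cong[OF conj_transpose, of transpose_mat] by (simp add: transpose_mbar transpose_uminus)
  ultimately show ?thesis
    using a \<beta> by (simp add: mstar_mbar transpose_mbar)
qed

end

theorem mainTheorem12:
  fixes \<sigma> :: "'e::field_char_0 \<Rightarrow> 'e" and n :: nat and \<beta> A' a :: "'e mat"
  assumes "quad_conj \<sigma>"
    and "\<beta> \<in> GLn n" and "skew_hermitian \<sigma> \<beta>"
    and "A' \<in> h_beta \<sigma> n \<beta>" and "regular_semisimple A'"
    and "a \<in> GLn n" and "A' = mbar \<sigma> a * a"
  shows "\<exists>\<zeta> \<in> GLn n. A' = minv n \<beta> * mstar \<sigma> \<zeta> * \<beta> * \<zeta>"
proof -
  note conj = assms(1)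
  have \<beta>: "\<beta> \<in> carrier_mat n n" and a: "a \<in> carrier_mat n n" and A': "A' \<in> carrier_mat n n"
    using GLn_carrier assms(2,4,6) unfolding h_beta_def by auto
  have skew: "mstar \<sigma> \<beta> = - \<beta>" using assms(3) unfolding skew_hermitian_def .
  have "transpose_mat (transpose_mat a * \<beta>) = transpose_mat a * \<beta>"
    using intertwiner_of_regular_semisimple_symmetric[OF A' assms(5)]
      h_beta_twisted_intertwiner[OF conj assms(2,4) a assms(7)] a \<beta> by simp
  then have twist: "mstar \<sigma> a * transpose_mat \<beta> = \<beta> * mbar \<sigma> a"
    by (rule mstar_mult_transpose_of_symmetric[OF conj \<beta> skew a])
  obtain Q where Q: "Q \<in> GLn n" and Q\<beta>: "mstar \<sigma> Q * \<beta> * Q = transpose_mat \<beta>"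
    using skew_hermitian_congruent_to_transpose[OF conj _ \<beta> skew] by auto
  have "minv n \<beta> * mstar \<sigma> (Q * a) * \<beta> * (Q * a) = minv n \<beta> * (mstar \<sigma> a * transpose_mat \<beta>) * a"
    using GLn_carrier[OF Q] a \<beta> minv_GLn[OF assms(2)]
    by (simp add: mstar_mult[OF conj, of _ n n] assoc_mult_mat[of _ n n _ n _ n] mult_carrier_mat[of _ n n _ n]
        flip: Q\<beta>)
  also have "\<dots> = A'"
    using a \<beta> minv_GLn[OF assms(2)]
    by (simp add: twist assms(7) assoc_mult_mat[of _ n n _ n _ n] mult_carrier_mat[of _ n n _ n]
        flip: assoc_mult_mat[of "minv n \<beta>" n n \<beta> n "mbar \<sigma> a * a" n])
  finally show ?thesis using GLn_mult[OF Q assms(6)] by metis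
qed

end
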